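(* Let $(A,B)$ be an imprecise copula. Then $(A,A_M)$ and $(B_O,B)$ are imprecise copulas, and $A\le A_M\le B$ and $A\le B_O\le B$; i.e. there is an imprecise copula contained in $(A,B)$ with the same lower bound and one with the same upper bound.
   Context: Quasi-copula: $Q:[0,1]^2\to\mathbb{R}$ grounded, with neutral element $1$, with $V_Q(R)\ge0$ for each rectangle having a side on the boundary of $[0,1]^2$, where $V_Q([s_1,s_2]\times[t_1,t_2])=Q(s_1,t_1)+Q(s_2,t_2)-Q(s_2,t_1)-Q(s_1,t_2)$. Defects: $\mathcal{R}_\nearrow(\mathbf{x}),\mathcal{R}_\swarrow(\mathbf{x}),\mathcal{R}_\nwarrow(\mathbf{x}),\mathcal{R}_\searrow(\mathbf{x})$ are the sets of (possibly degenerate) rectangles in $[0,1]^2$ with $\mathbf{x}$ as southwest, northeast, southeast, northwest corner; $D^Q_\bullet(\mathbf{x})=\inf\{V_Q(R):R\in\mathcal{R}_\bullet(\mathbf{x})\}$; $D^Q_M=\min(D^Q_\nearrow,D^Q_\swarrow)$, $D^Q_O=\min(D^Q_\nwarrow,D^Q_\searrow)$; $Q_M=Q-D^Q_M$, $Q_O=Q+D^Q_O$. Imprecise copula: a pair $(A,B)$ of grounded functions with neutral element 1 satisfying, for all rectangles with SW, SE, NE, NW corners $\mathbf{a},\mathbf{b},\mathbf{c},\mathbf{d}$: $A(\mathbf{a})+B(\mathbf{c})-A(\mathbf{b})-A(\mathbf{d})\ge0$, $B(\mathbf{a})+A(\mathbf{c})-A(\mathbf{b})-A(\mathbf{d})\ge0$,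 $B(\mathbf{a})+B(\mathbf{c})-B(\mathbf{b})-A(\mathbf{d})\ge0$, $B(\mathbf{a})+B(\mathbf{c})-A(\mathbf{b})-B(\mathbf{d})\ge0$. In an imprecise copula $A,B$ are quasi-copulas with $A\le B$. *)

theory Defs
  imports Complex_Main
begin

text \<open>Functions on the unit square are represented as curried functions
  real \<Rightarrow> real \<Rightarrow> real; only their values on [0,1]^2 matter.\<close>

definition grounded :: "(real \<Rightarrow> real \<Rightarrow> real) \<Rightarrow> bool" where
  "grounded Q \<longleftrightarrow> (\<forall>x\<in>{0..1}. Q x 0 = 0 \<and> Q 0 x = 0)"

definition neutral_one :: "(real \<Rightarrow> real \<Rightarrow> real) \<Rightarrow> bool" where
  "neutral_one Q \<longleftrightarrow> (\<forall>x\<in>{0..1}. Q x 1 = x \<and> Q 1 x = x)"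

definition vol :: "(real \<Rightarrow> real \<Rightarrow> real) \<Rightarrow> real \<Rightarrow> real \<Rightarrow> real \<Rightarrow> real \<Rightarrow> real" where
  "vol Q s1 s2 t1 t2 = Q s1 t1 + Q s2 t2 - Q s2 t1 - Q s1 t2"

definition quasi_copula :: "(real \<Rightarrow> real \<Rightarrow> real) \<Rightarrow> bool" where
  "quasi_copula Q \<longleftrightarrow> grounded Q \<and> neutral_one Q \<and>
     (\<forall>s1 s2 t1 t2. 0 \<le> s1 \<and> s1 \<le> s2 \<and> s2 \<le> 1 \<and> 0 \<le> t1 \<and> t1 \<le> t2 \<and> t2 \<le> 1 \<and>
        (s1 = 0 \<or> s2 = 1 \<or> t1 = 0 \<or> t2 = 1) \<longrightarrow> vol Q s1 s2 t1 t2 \<ge> 0)"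

text \<open>Defects. (x,y) is the SW / NE / SE / NW corner respectively.\<close>
definition defect_NE :: "(real \<Rightarrow> real \<Rightarrow> real) \<Rightarrow> real \<Rightarrow> real \<Rightarrow> real" where
  "defect_NE Q x y = Inf {vol Q x s y t | s t. x \<le> s \<and> s \<le> 1 \<and> y \<le> t \<and> t \<le> 1}"

definition defect_SW :: "(real \<Rightarrow> real \<Rightarrow> real) \<Rightarrow> real \<Rightarrow> real \<Rightarrow> real" where
  "defect_SW Q x y = Inf {vol Q s x t y | s t. 0 \<le> s \<and> s \<le> x \<and> 0 \<le> t \<and> t \<le> y}"

definition defect_NW :: "(real \<Rightarrow> real \<Rightarrow> real) \<Rightarrow> real \<Rightarrow> real \<Rightarrow> real" where
  "defect_NW Q x y = Inf {vol Q s x y t | s t. 0 \<le> s \<and> s \<le> x \<and> y \<le> t \<and> t \<le> 1}"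

definition defect_SE :: "(real \<Rightarrow> real \<Rightarrow> real) \<Rightarrow> real \<Rightarrow> real \<Rightarrow> real" where
  "defect_SE Q x y = Inf {vol Q x s t y | s t. x \<le> s \<and> s \<le> 1 \<and> 0 \<le> t \<and> t \<le> y}"

definition defect_M :: "(real \<Rightarrow> real \<Rightarrow> real) \<Rightarrow> real \<Rightarrow> real \<Rightarrow> real" where
  "defect_M Q x y = min (defect_NE Q x y) (defect_SW Q x y)"

definition defect_O :: "(real \<Rightarrow> real \<Rightarrow> real) \<Rightarrow> real \<Rightarrow> real \<Rightarrow> real" where
  "defect_O Q x y = min (defect_NW Q x y) (defect_SE Q x y)"

definition Q_M :: "(real \<Rightarrow> real \<Rightarrow> real) \<Rightarrow> real \<Rightarrow> real \<Rightarrow> real" where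
  "Q_M Q x y = Q x y - defect_M Q x y"

definition Q_O :: "(real \<Rightarrow> real \<Rightarrow> real) \<Rightarrow> real \<Rightarrow> real \<Rightarrow> real" where
  "Q_O Q x y = Q x y + defect_O Q x y"

text \<open>Imprecise copula: rectangle [s1,s2] x [t1,t2] with corners
  a = (s1,t1) (SW), b = (s2,t1) (SE), c = (s2,t2) (NE), d = (s1,t2) (NW).\<close>
definition imprecise_copula :: "(real \<Rightarrow> real \<Rightarrow> real) \<Rightarrow> (real \<Rightarrow> real \<Rightarrow> real) \<Rightarrow> bool" where
  "imprecise_copula A B \<longleftrightarrow> grounded A \<and> neutral_one A \<and> grounded B \<and> neutral_one B \<and>
     (\<forall>s1 s2 t1 t2. 0 \<le> s1 \<and> s1 \<le> s2 \<and> s2 \<le> 1 \<and> 0 \<le> t1 \<and> t1 \<le> t2 \<and> t2 \<le> 1 \<longrightarrow>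
        A s1 t1 + B s2 t2 - A s2 t1 - A s1 t2 \<ge> 0 \<and>
        B s1 t1 + A s2 t2 - A s2 t1 - A s1 t2 \<ge> 0 \<and>
        B s1 t1 + B s2 t2 - B s2 t1 - A s1 t2 \<ge> 0 \<and>
        B s1 t1 + B s2 t2 - A s2 t1 - B s1 t2 \<ge> 0)"

end

theory Submission
  imports Defs
begin

text \<open>The defect \<open>D\<^sub>M\<close> of \<open>A\<close> is nonpositive (degenerate rectangles) and bounded below
  by \<open>A - B\<close> (the imprecise-copula inequalities with the point as SW or NE corner), so
  \<open>A \<le> A\<^sub>M \<le> B\<close>. The inequalities making \<open>(A, A\<^sub>M)\<close> an imprecise copula reduce to
  \<open>D\<^sub>M(a) + D\<^sub>M(c) \<le> V\<^sub>A(R) + D\<^sub>M(b)\<close> for a rectangle \<open>R\<close> with corners \<open>a, b, c, d\<close>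
  (and likewise with \<open>d\<close>): for a rectangle \<open>R'\<close> having \<open>b\<close> as SW or NE corner,
  \<open>V\<^sub>A(R) + V\<^sub>A(R')\<close> is the sum of the volumes of two rectangles having \<open>a\<close> and \<open>c\<close>
  respectively as SW or NE corner.
  The inequality at \<open>d\<close> is the one at \<open>b\<close> for the transposed pair.
  The reflection \<open>Q(x,y) \<mapsto> x - Q(x,1-y)\<close> preserves volumes of reflected rectangles, turns the
  imprecise copula \<open>(A, B)\<close> into one with the roles of the bounds exchanged, and turns
  \<open>D\<^sub>O\<close> into \<open>D\<^sub>M\<close>; hence the statement for \<open>(B\<^sub>O, B)\<close> is the mirror image of that
  for \<open>(A, A\<^sub>M)\<close>.\<close>

lemma imprecise_copulaD:
  assumes "imprecise_copula A B" "0 \<le> s1" "s1 \<le> s2" "s2 \<le> 1" "0 \<le> t1" "t1 \<le> t2" "t2 \<le> 1"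
  shows "A s1 t1 + B s2 t2 - A s2 t1 - A s1 t2 \<ge> 0"
    and "B s1 t1 + A s2 t2 - A s2 t1 - A s1 t2 \<ge> 0"
    and "B s1 t1 + B s2 t2 - B s2 t1 - A s1 t2 \<ge> 0"
    and "B s1 t1 + B s2 t2 - A s2 t1 - B s1 t2 \<ge> 0"
  using assms unfolding imprecise_copula_def by blast+

lemma imprecise_copula_vol_lower:
  assumes "imprecise_copula A B" "0 \<le> s1" "s1 \<le> s2" "s2 \<le> 1" "0 \<le> t1" "t1 \<le> t2" "t2 \<le> 1"
  shows "A s1 t1 - B s1 t1 \<le> vol A s1 s2 t1 t2"
    and "A s2 t2 - B s2 t2 \<le> vol A s1 s2 t1 t2"
  using imprecise_copulaD[OF assms] by (auto simp: vol_def)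

lemma imprecise_copula_quasi_copula:
  assumes "imprecise_copula A B"
  shows "quasi_copula A"
  unfolding quasi_copula_def
proof (intro conjI allI impI)
  have g: "grounded A" "grounded B" and n: "neutral_one A" "neutral_one B"
    using assms unfolding imprecise_copula_def by auto
  then show "grounded A" "neutral_one A" by auto
  fix s1 s2 t1 t2 :: real
  assume "0 \<le> s1 \<and> s1 \<le> s2 \<and> s2 \<le> 1 \<and> 0 \<le> t1 \<and> t1 \<le> t2 \<and> t2 \<le> 1 \<and>
    (s1 = 0 \<or> s2 = 1 \<or> t1 = 0 \<or> t2 = 1)"
  then have r: "0 \<le> s1" "s1 \<le> s2" "s2 \<le> 1" "0 \<le> t1" "t1 \<le> t2" "t2 \<le> 1"
    and edge: "s1 = 0 \<or> s2 = 1 \<or> t1 = 0 \<or> t2 = 1" by auto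
  note ineq = imprecise_copulaD(1)[OF assms r] imprecise_copulaD(2)[OF assms r]
  from edge show "0 \<le> vol A s1 s2 t1 t2"
  proof (elim disjE)
    assume "s1 = 0"
    then show ?thesis using ineq(2) g r unfolding grounded_def vol_def by simp
  next
    assume "s2 = 1"
    then show ?thesis using ineq(1) n r unfolding neutral_one_def vol_def by simp
  next
    assume "t1 = 0"
    then show ?thesis using ineq(2) g r unfolding grounded_def vol_def by simp
  next
    assume "t2 = 1"
    then show ?thesis using ineq(1) n r unfolding neutral_one_def vol_def by simp
  qed
qed

lemma le_defect_M_iff:
  assumes "imprecise_copula A B" "0 \<le> x" "x \<le> 1" "0 \<le> y" "y \<le> 1"
  shows "c \<le> defect_M A x y \<longleftrightarrow>
    (\<forall>s t. x \<le> s \<and> s \<le> 1 \<and> y \<le> t \<and> t \<le> 1 \<longrightarrow> c \<le> vol A x s y t) \<and>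
    (\<forall>s t. 0 \<le> s \<and> s \<le> x \<and> 0 \<le> t \<and> t \<le> y \<longrightarrow> c \<le> vol A s x t y)"
proof -
  let ?NE = "{vol A x s y t | s t. x \<le> s \<and> s \<le> 1 \<and> y \<le> t \<and> t \<le> 1}"
  let ?SW = "{vol A s x t y | s t. 0 \<le> s \<and> s \<le> x \<and> 0 \<le> t \<and> t \<le> y}"
  have "?NE \<noteq> {}" "?SW \<noteq> {}"
    using assms by blast+
  moreover have "bdd_below ?NE"
    by (rule bdd_belowI[of _ "A x y - B x y"])
      (use imprecise_copula_vol_lower(1)[OF assms(1)] assms in force)
  moreover have "bdd_below ?SW"
    by (rule bdd_belowI[of _ "A x y - B x y"])
      (use imprecise_copula_vol_lower(2)[OF assms(1)] assms in force)
  ultimately have "c \<le> Inf ?NE \<longleftrightarrow> (\<forall>z\<in>?NE. c \<le> z)" "c \<le> Inf ?SW \<longleftrightarrow> (\<forall>z\<in>?SW. c \<le> z)"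
    by (simp_all add: le_cInf_iff)
  then show ?thesis
    unfolding defect_M_def defect_NE_def defect_SW_def min.bounded_iff by blast
qed

lemma defect_M_le_vol_NE:
  assumes "imprecise_copula A B" "0 \<le> x" "x \<le> s" "s \<le> 1" "0 \<le> y" "y \<le> t" "t \<le> 1"
  shows "defect_M A x y \<le> vol A x s y t"
  using le_defect_M_iff[OF assms(1), of x y "defect_M A x y"] assms by auto

lemma defect_M_le_vol_SW:
  assumes "imprecise_copula A B" "0 \<le> s" "s \<le> x" "x \<le> 1" "0 \<le> t" "t \<le> y" "y \<le> 1"
  shows "defect_M A x y \<le> vol A s x t y"
  using le_defect_M_iff[OF assms(1), of x y "defect_M A x y"] assms by auto

lemma defect_M_nonpos:
  assumes "imprecise_copula A B" "0 \<le> x" "x \<le> 1" "0 \<le> y" "y \<le> 1"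
  shows "defect_M A x y \<le> 0"
  using defect_M_le_vol_NE[OF assms(1), of x x y y] assms by (simp add: vol_def)

lemma defect_M_lower:
  assumes "imprecise_copula A B" "0 \<le> x" "x \<le> 1" "0 \<le> y" "y \<le> 1"
  shows "A x y - B x y \<le> defect_M A x y"
  using imprecise_copula_vol_lower[OF assms(1)] assms by (simp add: le_defect_M_iff)

lemma defect_M_boundary:
  assumes "imprecise_copula A B" "0 \<le> x" "x \<le> 1" "0 \<le> y" "y \<le> 1"
    and "x = 0 \<or> x = 1 \<or> y = 0 \<or> y = 1"
  shows "defect_M A x y = 0"
proof -
  have "quasi_copula A"
    using assms(1) by (rule imprecise_copula_quasi_copula)
  then have "0 \<le> defect_M A x y"
    using assms unfolding le_defect_M_iff[OF assms(1-5)] quasi_copula_def by auto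
  then show ?thesis
    using defect_M_nonpos[OF assms(1-5)] by simp
qed

lemma defect_M_add_le_SE:
  assumes ic: "imprecise_copula A B"
    and r: "0 \<le> s1" "s1 \<le> s2" "s2 \<le> 1" "0 \<le> t1" "t1 \<le> t2" "t2 \<le> 1"
  shows "defect_M A s1 t1 + defect_M A s2 t2 \<le> vol A s1 s2 t1 t2 + defect_M A s2 t1"
proof -
  let ?c = "defect_M A s1 t1 + defect_M A s2 t2 - vol A s1 s2 t1 t2"
  have corner: "0 \<le> s2" "t1 \<le> 1"
    using r by auto
  have "?c \<le> defect_M A s2 t1"
    unfolding le_defect_M_iff[OF ic corner(1) r(3) r(4) corner(2)]
  proof (intro conjI allI impI)
    fix u v assume h: "s2 \<le> u \<and> u \<le> 1 \<and> t1 \<le> v \<and> v \<le> 1"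
    show "?c \<le> vol A s2 u t1 v"
    proof (cases "t2 \<le> v")
      case True
      have "defect_M A s1 t1 \<le> vol A s1 u t1 t2" "defect_M A s2 t2 \<le> vol A s2 u t2 v"
        using r h True by (auto intro!: defect_M_le_vol_NE[OF ic])
      then show ?thesis by (simp add: vol_def)
    next
      case False
      have "defect_M A s1 t1 \<le> vol A s1 u t1 v" "defect_M A s2 t2 \<le> vol A s1 s2 v t2"
        using r h False by (auto intro: defect_M_le_vol_NE[OF ic] defect_M_le_vol_SW[OF ic])
      then show ?thesis by (simp add: vol_def)
    qed
  next
    fix u v assume h: "0 \<le> u \<and> u \<le> s2 \<and> 0 \<le> v \<and> v \<le> t1"
    show "?c \<le> vol A u s2 v t1"
    proof (cases "u \<le> s1")
      case True
      have "defect_M A s1 t1 \<le> vol A u s1 v t1" "defect_M A s2 t2 \<le> vol A s1 s2 v t2"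
        using r h True by (auto intro!: defect_M_le_vol_SW[OF ic])
      then show ?thesis by (simp add: vol_def)
    next
      case False
      have "defect_M A s1 t1 \<le> vol A s1 u t1 t2" "defect_M A s2 t2 \<le> vol A u s2 v t2"
        using r h False by (auto intro: defect_M_le_vol_NE[OF ic] defect_M_le_vol_SW[OF ic])
      then show ?thesis by (simp add: vol_def)
    qed
  qed
  then show ?thesis by simp
qed

lemma imprecise_copula_transpose:
  assumes "imprecise_copula A B"
  shows "imprecise_copula (\<lambda>x y. A y x) (\<lambda>x y. B y x)"
proof -
  have "grounded A" "neutral_one A" "grounded B" "neutral_one B"
    using assms unfolding imprecise_copula_def by auto
  moreover have "\<forall>s1 s2 t1 t2. 0 \<le> s1 \<and> s1 \<le> s2 \<and> s2 \<le> 1 \<and> 0 \<le> t1 \<and> t1 \<le> t2 \<and> t2 \<le> 1 \<longrightarrow>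
      A t1 s1 + B t2 s2 - A t1 s2 - A t2 s1 \<ge> 0 \<and>
      B t1 s1 + A t2 s2 - A t1 s2 - A t2 s1 \<ge> 0 \<and>
      B t1 s1 + B t2 s2 - B t1 s2 - A t2 s1 \<ge> 0 \<and>
      B t1 s1 + B t2 s2 - A t1 s2 - B t2 s1 \<ge> 0"
  proof (intro allI impI)
    fix s1 s2 t1 t2 :: real
    assume "0 \<le> s1 \<and> s1 \<le> s2 \<and> s2 \<le> 1 \<and> 0 \<le> t1 \<and> t1 \<le> t2 \<and> t2 \<le> 1"
    then show "A t1 s1 + B t2 s2 - A t1 s2 - A t2 s1 \<ge> 0 \<and>
      B t1 s1 + A t2 s2 - A t1 s2 - A t2 s1 \<ge> 0 \<and>
      B t1 s1 + B t2 s2 - B t1 s2 - A t2 s1 \<ge> 0 \<and>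
      B t1 s1 + B t2 s2 - A t1 s2 - B t2 s1 \<ge> 0"
      using imprecise_copulaD[OF assms, of t1 t2 s1 s2] by linarith
  qed
  ultimately show ?thesis
    unfolding imprecise_copula_def grounded_def neutral_one_def by blast
qed

lemma vol_transpose: "vol (\<lambda>x y. Q y x) s1 s2 t1 t2 = vol Q t1 t2 s1 s2"
  by (simp add: vol_def)

lemma defect_M_transpose: "defect_M (\<lambda>x y. Q y x) x y = defect_M Q y x"
proof -
  have "{vol Q y t x s | s t. x \<le> s \<and> s \<le> 1 \<and> y \<le> t \<and> t \<le> 1} =
      {vol Q y s x t | s t. y \<le> s \<and> s \<le> 1 \<and> x \<le> t \<and> t \<le> 1}"
    "{vol Q t y s x | s t. 0 \<le> s \<and> s \<le> x \<and> 0 \<le> t \<and> t \<le> y} =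
      {vol Q s y t x | s t. 0 \<le> s \<and> s \<le> y \<and> 0 \<le> t \<and> t \<le> x}"
    by blast+
  then show ?thesis
    unfolding defect_M_def defect_NE_def defect_SW_def vol_transpose[of Q] by (simp add: min.commute)
qed

lemma defect_M_add_le_NW:
  assumes "imprecise_copula A B" "0 \<le> s1" "s1 \<le> s2" "s2 \<le> 1" "0 \<le> t1" "t1 \<le> t2" "t2 \<le> 1"
  shows "defect_M A s1 t1 + defect_M A s2 t2 \<le> vol A s1 s2 t1 t2 + defect_M A s1 t2"
  using defect_M_add_le_SE[OF imprecise_copula_transpose[OF assms(1)] assms(5-7,2-4)]
  by (simp add: defect_M_transpose[of A] vol_transpose[of A])

lemma imprecise_copula_Q_M:
  assumes ic: "imprecise_copula A B"
  shows "imprecise_copula A (Q_M A)"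
  unfolding imprecise_copula_def
proof (intro conjI allI impI)
  have "grounded A" "neutral_one A"
    using ic unfolding imprecise_copula_def by auto
  then show "grounded A" "neutral_one A" "grounded (Q_M A)" "neutral_one (Q_M A)"
    using defect_M_boundary[OF ic] unfolding grounded_def neutral_one_def Q_M_def by auto
  fix s1 s2 t1 t2 :: real
  assume "0 \<le> s1 \<and> s1 \<le> s2 \<and> s2 \<le> 1 \<and> 0 \<le> t1 \<and> t1 \<le> t2 \<and> t2 \<le> 1"
  then have r: "0 \<le> s1" "s1 \<le> s2" "s2 \<le> 1" "0 \<le> t1" "t1 \<le> t2" "t2 \<le> 1"
    by auto
  have "defect_M A s2 t2 \<le> vol A s1 s2 t1 t2" "defect_M A s1 t1 \<le> vol A s1 s2 t1 t2"
    using r by (auto intro: defect_M_le_vol_SW[OF ic] defect_M_le_vol_NE[OF ic])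
  with defect_M_add_le_SE[OF ic r] defect_M_add_le_NW[OF ic r]
  show "A s1 t1 + Q_M A s2 t2 - A s2 t1 - A s1 t2 \<ge> 0"
    and "Q_M A s1 t1 + A s2 t2 - A s2 t1 - A s1 t2 \<ge> 0"
    and "Q_M A s1 t1 + Q_M A s2 t2 - Q_M A s2 t1 - A s1 t2 \<ge> 0"
    and "Q_M A s1 t1 + Q_M A s2 t2 - A s2 t1 - Q_M A s1 t2 \<ge> 0"
    by (simp_all add: Q_M_def vol_def)
qed

lemma Q_M_bounds:
  assumes "imprecise_copula A B" "0 \<le> x" "x \<le> 1" "0 \<le> y" "y \<le> 1"
  shows "A x y \<le> Q_M A x y" "Q_M A x y \<le> B x y"
  using defect_M_nonpos[OF assms] defect_M_lower[OF assms] by (simp_all add: Q_M_def)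

definition reflect_snd :: "(real \<Rightarrow> real \<Rightarrow> real) \<Rightarrow> real \<Rightarrow> real \<Rightarrow> real" where
  "reflect_snd Q x y = x - Q x (1 - y)"

lemma reflect_snd_reflect_snd [simp]: "reflect_snd (reflect_snd Q) = Q"
  by (simp add: reflect_snd_def fun_eq_iff)

lemma vol_reflect_snd: "vol (reflect_snd Q) s1 s2 t1 t2 = vol Q s1 s2 (1 - t2) (1 - t1)"
  by (simp add: vol_def reflect_snd_def)

lemma imprecise_copula_reflect_snd:
  assumes "imprecise_copula A B"
  shows "imprecise_copula (reflect_snd B) (reflect_snd A)"
proof -
  have "grounded A" "neutral_one A" "grounded B" "neutral_one B"
    using assms unfolding imprecise_copula_def by auto
  then have "grounded (reflect_snd Q) \<and> neutral_one (reflect_snd Q)" if "Q = A \<or> Q = B" for Q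
    using that unfolding grounded_def neutral_one_def reflect_snd_def by auto
  moreover have "\<forall>s1 s2 t1 t2. 0 \<le> s1 \<and> s1 \<le> s2 \<and> s2 \<le> 1 \<and> 0 \<le> t1 \<and> t1 \<le> t2 \<and> t2 \<le> 1 \<longrightarrow>
      reflect_snd B s1 t1 + reflect_snd A s2 t2 - reflect_snd B s2 t1 - reflect_snd B s1 t2 \<ge> 0 \<and>
      reflect_snd A s1 t1 + reflect_snd B s2 t2 - reflect_snd B s2 t1 - reflect_snd B s1 t2 \<ge> 0 \<and>
      reflect_snd A s1 t1 + reflect_snd A s2 t2 - reflect_snd A s2 t1 - reflect_snd B s1 t2 \<ge> 0 \<and>
      reflect_snd A s1 t1 + reflect_snd A s2 t2 - reflect_snd B s2 t1 - reflect_snd A s1 t2 \<ge> 0"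
  proof (intro allI impI)
    fix s1 s2 t1 t2 :: real
    assume "0 \<le> s1 \<and> s1 \<le> s2 \<and> s2 \<le> 1 \<and> 0 \<le> t1 \<and> t1 \<le> t2 \<and> t2 \<le> 1"
    then show "reflect_snd B s1 t1 + reflect_snd A s2 t2 - reflect_snd B s2 t1 - reflect_snd B s1 t2 \<ge> 0 \<and>
      reflect_snd A s1 t1 + reflect_snd B s2 t2 - reflect_snd B s2 t1 - reflect_snd B s1 t2 \<ge> 0 \<and>
      reflect_snd A s1 t1 + reflect_snd A s2 t2 - reflect_snd A s2 t1 - reflect_snd B s1 t2 \<ge> 0 \<and>
      reflect_snd A s1 t1 + reflect_snd A s2 t2 - reflect_snd B s2 t1 - reflect_snd A s1 t2 \<ge> 0"
      using imprecise_copulaD[OF assms, of s1 s2 "1 - t2" "1 - t1"]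
      unfolding reflect_snd_def by linarith
  qed
  ultimately show ?thesis
    unfolding imprecise_copula_def by blast
qed

lemma defect_M_reflect_snd: "defect_M (reflect_snd Q) x y = defect_O Q x (1 - y)"
proof -
  have "{vol Q x s (1 - t) (1 - y) | s t. x \<le> s \<and> s \<le> 1 \<and> y \<le> t \<and> t \<le> 1} =
      {vol Q x s t (1 - y) | s t. x \<le> s \<and> s \<le> 1 \<and> 0 \<le> t \<and> t \<le> 1 - y}"
    "{vol Q s x (1 - y) (1 - t) | s t. 0 \<le> s \<and> s \<le> x \<and> 0 \<le> t \<and> t \<le> y} =
      {vol Q s x (1 - y) t | s t. 0 \<le> s \<and> s \<le> x \<and> 1 - y \<le> t \<and> t \<le> 1}"
    by (auto; rule_tac x = s in exI, rule_tac x = "1 - t" in exI, simp)+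
  then show ?thesis
    unfolding defect_M_def defect_O_def defect_NE_def defect_SW_def defect_NW_def defect_SE_def
      vol_reflect_snd by (simp add: min.commute)
qed

lemma Q_M_reflect_snd: "Q_M (reflect_snd Q) = reflect_snd (Q_O Q)"
  by (simp add: fun_eq_iff Q_M_def Q_O_def reflect_snd_def defect_M_reflect_snd)

lemma imprecise_copula_Q_O:
  assumes "imprecise_copula A B"
  shows "imprecise_copula (Q_O B) B"
  using imprecise_copula_reflect_snd[OF imprecise_copula_Q_M[OF imprecise_copula_reflect_snd[OF assms]]]
  by (simp add: Q_M_reflect_snd)

lemma Q_O_bounds:
  assumes "imprecise_copula A B" "0 \<le> x" "x \<le> 1" "0 \<le> y" "y \<le> 1"
  shows "A x y \<le> Q_O B x y" "Q_O B x y \<le> B x y"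
  using Q_M_bounds[OF imprecise_copula_reflect_snd[OF assms(1)], of x "1 - y"] assms(2-5)
  by (simp_all add: Q_M_reflect_snd reflect_snd_def)

theorem mainTheorem8:
  fixes A B :: "real \<Rightarrow> real \<Rightarrow> real"
  assumes "imprecise_copula A B"
  shows "imprecise_copula A (Q_M A) \<and> imprecise_copula (Q_O B) B \<and>
    (\<forall>x\<in>{0..1}. \<forall>y\<in>{0..1}.
       A x y \<le> Q_M A x y \<and> Q_M A x y \<le> B x y \<and>
       A x y \<le> Q_O B x y \<and> Q_O B x y \<le> B x y)"
  using imprecise_copula_Q_M[OF assms] imprecise_copula_Q_O[OF assms]
    Q_M_bounds[OF assms] Q_O_bounds[OF assms] by auto

end
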